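(* For $N<N'$ let $\iota_{N,N'}:\mathcal M(N,K)\to\mathcal M(N',K)$ be the closed embedding $(B,\psi,\overline\psi)\mapsto\left(\begin{bmatrix}B&0\\0&0\end{bmatrix},\begin{bmatrix}\psi\\0\end{bmatrix},\begin{bmatrix}\overline\psi&0\end{bmatrix}\right)$. Then: (1) $\iota_{N',N''}\circ\iota_{N,N'}=\iota_{N,N''}$ for $N<N'<N''$; (2) $\iota_{N,N'}$ is Poisson; (3) $\mathfrak m_{N_1',N_2'}\circ(\iota_{N_1,N_1'}\times\iota_{N_2,N_2'})=\iota_{N_1+N_2,N_1'+N_2'}\circ\mathfrak m_{N_1,N_2}$ for $N_1\le N_1'$, $N_2\le N_2'$ (with $\iota_{N,N}=\mathrm{Id}$).
   Context: $\mathcal M(N,K)=\mathrm{Rep}(N,K)/\!/\mathrm{GL}_N$, with $\mathrm{Rep}(N,K)$ the triples $(B,\psi,\overline\psi)$, $B\in\mathrm{Mat}_{N\times N}(\mathbb C)$, $\psi\in\mathrm{Mat}_{N\times K}$, $\overline\psi\in\mathrm{Mat}_{K\times N}$, and $g\cdot(B,\psi,\overline\psi)=(gBg^{-1},g\psi,\overline\psi g^{-1})$. The Poisson structure on $\mathcal M(N,K)$ is induced from $\{\psi_{ia},\overline\psi_{bj}\}=\delta_{ab}\delta_{ij}$, $\{B_{mn},B_{pq}\}=\delta_{np}\sum_a\overline\psi_{aq}\psi_{ma}-\delta_{mq}\sum_a\overline\psi_{an}\psi_{pa}$, $\{B_{mn},\psi_{ia}\}=\{B_{mn},\overline\psi_{bj}\}=0$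 (commuting variables). $\mathfrak m_{N_1,N_2}$ sends $(B^{(1)},\psi^{(1)},\overline\psi^{(1)})\times(B^{(2)},\psi^{(2)},\overline\psi^{(2)})$ to $\left(\begin{bmatrix}B^{(1)}&\psi^{(1)}\overline\psi^{(2)}\\-\psi^{(2)}\overline\psi^{(1)}&B^{(2)}\end{bmatrix},\begin{bmatrix}\psi^{(1)}\\\psi^{(2)}\end{bmatrix},\begin{bmatrix}\overline\psi^{(1)}&\overline\psi^{(2)}\end{bmatrix}\right)$. *)

theory Defs
  imports Complex_Main "Jordan_Normal_Form.Matrix"
begin

type_synonym rep = "complex mat \<times> complex mat \<times> complex mat"

definition Rep :: "nat \<Rightarrow> nat \<Rightarrow> rep set" where
  "Rep N K = {(B, p, q). B \<in> carrier_mat N N \<and> p \<in> carrier_mat N K \<and> q \<in> carrier_mat K N}"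

datatype coord = CB nat nat | CP nat nat | CPb nat nat

definition coords :: "nat \<Rightarrow> nat \<Rightarrow> coord set" where
  "coords N K = {CB i j | i j. i < N \<and> j < N} \<union> {CP i a | i a. i < N \<and> a < K}
              \<union> {CPb b j | b j. b < K \<and> j < N}"

fun coordval :: "coord \<Rightarrow> rep \<Rightarrow> complex" where
  "coordval (CB i j) (B, p, q) = B $$ (i, j)"
| "coordval (CP i a) (B, p, q) = p $$ (i, a)"
| "coordval (CPb b j) (B, p, q) = q $$ (b, j)"

inductive_set polyfun :: "nat \<Rightarrow> nat \<Rightarrow> (rep \<Rightarrow> complex) set" for N K where
  pf_const: "(\<lambda>x. c) \<in> polyfun N K"
| pf_coord: "c \<in> coords N K \<Longrightarrow> coordval c \<in> polyfun N K"
| pf_add: "f \<in> polyfun N K \<Longrightarrow> g \<in> polyfun N K \<Longrightarrow> (\<lambda>x. f x + g x) \<in> polyfun N K"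
| pf_mult: "f \<in> polyfun N K \<Longrightarrow> g \<in> polyfun N K \<Longrightarrow> (\<lambda>x. f x * g x) \<in> polyfun N K"

text \<open>GL_N action, g with inverse h: (g B g^-1, g psi, psibar g^-1).\<close>
fun act :: "complex mat \<Rightarrow> complex mat \<Rightarrow> rep \<Rightarrow> rep" where
  "act g h (B, p, q) = (g * B * h, g * p, q * h)"

text \<open>GL_N-invariant polynomial functions = coordinate ring of M(N,K).\<close>
definition invpoly :: "nat \<Rightarrow> nat \<Rightarrow> (rep \<Rightarrow> complex) \<Rightarrow> bool" where
  "invpoly N K f \<longleftrightarrow> f \<in> polyfun N K \<and>
     (\<forall>x\<in>Rep N K. \<forall>g h. g \<in> carrier_mat N N \<and> h \<in> carrier_mat N N \<and> g * h = 1\<^sub>m N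
        \<longrightarrow> f (act g h x) = f x)"

text \<open>Points of the affine GIT quotient M(N,K): classes of points of Rep(N,K)
  not separated by invariant polynomials.\<close>
definition qrel :: "nat \<Rightarrow> nat \<Rightarrow> (rep \<times> rep) set" where
  "qrel N K = {(x, y). x \<in> Rep N K \<and> y \<in> Rep N K \<and> (\<forall>f. invpoly N K f \<longrightarrow> f x = f y)}"

definition Mq :: "nat \<Rightarrow> nat \<Rightarrow> rep set set" where
  "Mq N K = Rep N K // qrel N K"

definition qmap :: "nat \<Rightarrow> nat \<Rightarrow> (rep \<Rightarrow> rep) \<Rightarrow> rep set \<Rightarrow> rep set" where
  "qmap N' K F X = qrel N' K `` {F (SOME x. x \<in> X)}"

definition qmap2 :: "nat \<Rightarrow> nat \<Rightarrow> (rep \<Rightarrow> rep \<Rightarrow> rep) \<Rightarrow> rep set \<Rightarrow> rep set \<Rightarrow> rep set" where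
  "qmap2 N' K F X Y = qrel N' K `` {F (SOME x. x \<in> X) (SOME y. y \<in> Y)}"

fun iota :: "nat \<Rightarrow> nat \<Rightarrow> nat \<Rightarrow> rep \<Rightarrow> rep" where
  "iota N N' K (B, p, q) =
     (four_block_mat B (0\<^sub>m N (N' - N)) (0\<^sub>m (N' - N) N) (0\<^sub>m (N' - N) (N' - N)),
      four_block_mat p (0\<^sub>m N 0) (0\<^sub>m (N' - N) K) (0\<^sub>m (N' - N) 0),
      four_block_mat q (0\<^sub>m K (N' - N)) (0\<^sub>m 0 N) (0\<^sub>m 0 (N' - N)))"

fun mmap :: "nat \<Rightarrow> nat \<Rightarrow> nat \<Rightarrow> rep \<Rightarrow> rep \<Rightarrow> rep" where
  "mmap N1 N2 K (B1, p1, q1) (B2, p2, q2) =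
     (four_block_mat B1 (p1 * q2) (- (p2 * q1)) B2,
      four_block_mat p1 (0\<^sub>m N1 0) p2 (0\<^sub>m N2 0),
      four_block_mat q1 q2 (0\<^sub>m 0 N1) (0\<^sub>m 0 N2))"

definition emat :: "nat \<Rightarrow> nat \<Rightarrow> nat \<Rightarrow> nat \<Rightarrow> complex mat" where
  "emat nr nc i j = mat nr nc (\<lambda>(k, l). if k = i \<and> l = j then 1 else 0)"

fun bump :: "rep \<Rightarrow> coord \<Rightarrow> complex \<Rightarrow> rep" where
  "bump (B, p, q) (CB i j) t = (B + t \<cdot>\<^sub>m emat (dim_row B) (dim_col B) i j, p, q)"
| "bump (B, p, q) (CP i a) t = (B, p + t \<cdot>\<^sub>m emat (dim_row p) (dim_col p) i a, q)"
| "bump (B, p, q) (CPb b j) t = (B, p, q + t \<cdot>\<^sub>m emat (dim_row q) (dim_col q) b j)"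

definition pd :: "(rep \<Rightarrow> complex) \<Rightarrow> coord \<Rightarrow> rep \<Rightarrow> complex" where
  "pd f c x = (SOME D. ((\<lambda>t. f (bump x c t)) has_field_derivative D) (at 0))"

text \<open>Brackets of the coordinate functions, evaluated at a point.\<close>
fun cbr :: "nat \<Rightarrow> coord \<Rightarrow> coord \<Rightarrow> rep \<Rightarrow> complex" where
  "cbr K (CP i a) (CPb b j) x = (if a = b \<and> i = j then 1 else 0)"
| "cbr K (CPb b j) (CP i a) x = - (if a = b \<and> i = j then 1 else 0)"
| "cbr K (CB m n) (CB p' q') (B, p, q) =
     (if n = p' then (\<Sum>a<K. q $$ (a, q') * p $$ (m, a)) else 0)
   - (if m = q' then (\<Sum>a<K. q $$ (a, n) * p $$ (p', a)) else 0)"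
| "cbr K c c' x = 0"

definition pbr :: "nat \<Rightarrow> nat \<Rightarrow> (rep \<Rightarrow> complex) \<Rightarrow> (rep \<Rightarrow> complex) \<Rightarrow> rep \<Rightarrow> complex" where
  "pbr N K f g x = (\<Sum>c\<in>coords N K. \<Sum>c'\<in>coords N K. pd f c x * pd g c' x * cbr K c c' x)"

end

(* Everything is checked on representatives.  Both iota and m are polynomial and
   GL-equivariant (conjugation by block-diagonal matrices), hence they preserve the relation
   "not separated by invariant polynomials" and descend to the quotients.  On representatives
   iota x = m(x, 0) is fusion with the zero point, and m is associative; so (1) is associativity
   together with m(0, 0) = 0, and (3) reduces to m(0, y) ~ m(y, 0), two points that differ by
   conjugation with a block permutation matrix.

   For (2): all entries of iota x with an index r >= N vanish, so iota x is fixed by the diagonal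
   matrix that scales the index r by 2.  For an invariant f this forces the partial derivative in
   every coordinate involving r to vanish, since that coordinate is rescaled by 2 or 1/2 --
   except for the diagonal entry B_rr, whose brackets vanish at iota x.  Hence the bracket on
   Rep(N', K) at iota x only involves the coordinates of Rep(N, K), where it is the bracket of
   the pulled-back functions. *)

theory Submission
  imports Defs
begin

section \<open>Block matrices\<close>

lemma uminus_zero_mat [simp]: "- 0\<^sub>m nr nc = (0\<^sub>m nr nc :: 'a :: group_add mat)"
  by (rule eq_matI) auto

(* As in mmap, a block column of X1 over X2 is encoded as four_block_mat X1 (0 n1 0) X2 (0 n2 0),
   and a block row likewise with an empty second row. *)

lemma four_block_mat_assoc:
  assumes "A11 \<in> carrier_mat n1 m1" "A12 \<in> carrier_mat n1 m2" "A21 \<in> carrier_mat n2 m1"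
    "A22 \<in> carrier_mat n2 m2" "X1 \<in> carrier_mat n1 m3" "X2 \<in> carrier_mat n2 m3"
    "Y1 \<in> carrier_mat n3 m1" "Y2 \<in> carrier_mat n3 m2" "A33 \<in> carrier_mat n3 m3"
  shows "four_block_mat (four_block_mat A11 A12 A21 A22)
      (four_block_mat X1 (0\<^sub>m n1 0) X2 (0\<^sub>m n2 0))
      (four_block_mat Y1 Y2 (0\<^sub>m 0 m1) (0\<^sub>m 0 m2)) A33
    = four_block_mat A11 (four_block_mat A12 X1 (0\<^sub>m 0 m2) (0\<^sub>m 0 m3))
      (four_block_mat A21 (0\<^sub>m n2 0) Y1 (0\<^sub>m n3 0)) (four_block_mat A22 X2 Y2 A33)"
    (is "?L = ?R")
proof (rule eq_matI)
  fix i j assume "i < dim_row ?R" "j < dim_col ?R"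
  then have "i < n1 + (n2 + n3)" "j < m1 + (m2 + m3)" using assms by auto
  then show "?L $$ (i, j) = ?R $$ (i, j)"
    using assms by (cases "i < n1"; cases "i < n1 + n2"; cases "j < m1"; cases "j < m1 + m2")
      (simp_all add: not_less less_diff_conv2 diff_diff_left)
qed (use assms in auto)

lemma four_block_mat_column_mult:
  assumes "X1 \<in> carrier_mat n1 k" "X2 \<in> carrier_mat n2 k" "Q \<in> carrier_mat k m"
  shows "four_block_mat X1 (0\<^sub>m n1 0) X2 (0\<^sub>m n2 0) * Q
    = four_block_mat (X1 * Q) (0\<^sub>m n1 0) (X2 * Q) (0\<^sub>m n2 0)"
  by (rule eq_matI) (use assms in \<open>auto simp: scalar_prod_def\<close>)

lemma mult_four_block_mat_row:
  assumes "P \<in> carrier_mat n k" "Y1 \<in> carrier_mat k m1" "Y2 \<in> carrier_mat k m2"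
  shows "P * four_block_mat Y1 Y2 (0\<^sub>m 0 m1) (0\<^sub>m 0 m2)
    = four_block_mat (P * Y1) (P * Y2) (0\<^sub>m 0 m1) (0\<^sub>m 0 m2)"
  by (rule eq_matI) (use assms in \<open>auto simp: scalar_prod_def\<close>)

lemma uminus_four_block_mat:
  assumes "A \<in> carrier_mat nr1 nc1" "B \<in> carrier_mat nr1 nc2" "C \<in> carrier_mat nr2 nc1"
    "D \<in> carrier_mat nr2 nc2"
  shows "- four_block_mat A B C D = four_block_mat (- A) (- B) (- C) (- D)"
  by (rule eq_matI) (use assms in auto)

lemma diag_block_mat_pair:
  "diag_block_mat [A, D]
    = four_block_mat A (0\<^sub>m (dim_row A) (dim_col D)) (0\<^sub>m (dim_row D) (dim_col A)) D"
  by (simp only: diag_block_mat.simps(2)[of A] diag_block_mat_singleton Let_def)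

lemma diag_block_mat_pair_carrier:
  "g1 \<in> carrier_mat n1 n1 \<Longrightarrow> g2 \<in> carrier_mat n2 n2 \<Longrightarrow>
    diag_block_mat [g1, g2] \<in> carrier_mat (n1 + n2) (n1 + n2)"
  unfolding diag_block_mat_pair by auto

lemma diag_block_mat_mult_four_block_mat:
  assumes "g1 \<in> carrier_mat n1 n1" "g2 \<in> carrier_mat n2 n2" "A \<in> carrier_mat n1 m1"
    "B \<in> carrier_mat n1 m2" "C \<in> carrier_mat n2 m1" "D \<in> carrier_mat n2 m2"
  shows "diag_block_mat [g1, g2] * four_block_mat A B C D
    = four_block_mat (g1 * A) (g1 * B) (g2 * C) (g2 * D)"
  unfolding diag_block_mat_pair using assms
  by (simp add: mult_four_block_mat[of _ n1 n1 _ n2 _ n2 _ _ m1 _ m2])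

lemma four_block_mat_mult_diag_block_mat:
  assumes "h1 \<in> carrier_mat m1 m1" "h2 \<in> carrier_mat m2 m2" "A \<in> carrier_mat n1 m1"
    "B \<in> carrier_mat n1 m2" "C \<in> carrier_mat n2 m1" "D \<in> carrier_mat n2 m2"
  shows "four_block_mat A B C D * diag_block_mat [h1, h2]
    = four_block_mat (A * h1) (B * h2) (C * h1) (D * h2)"
  unfolding diag_block_mat_pair using assms
  by (simp add: mult_four_block_mat[of _ n1 m1 _ m2 _ n2 _ _ m1 _ m2])

lemma diag_block_mat_pair_mult:
  assumes "g1 \<in> carrier_mat n1 n1" "g2 \<in> carrier_mat n2 n2"
    "h1 \<in> carrier_mat n1 n1" "h2 \<in> carrier_mat n2 n2"
  shows "diag_block_mat [g1, g2] * diag_block_mat [h1, h2] = diag_block_mat [g1 * h1, g2 * h2]"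
  using assms diag_block_mat_mult_four_block_mat[of g1 n1 g2 n2 h1 n1 _ n2]
  by (simp add: diag_block_mat_pair del: diag_block_mat.simps)

lemma diag_block_mat_pair_one: "diag_block_mat [1\<^sub>m n1, 1\<^sub>m n2] = 1\<^sub>m (n1 + n2)"
  by (simp add: diag_block_mat_pair del: diag_block_mat.simps)

definition swap_blocks_mat :: "nat \<Rightarrow> nat \<Rightarrow> 'a :: {zero, one} mat" where
  "swap_blocks_mat n d = four_block_mat (0\<^sub>m n d) (1\<^sub>m n) (1\<^sub>m d) (0\<^sub>m d n)"

lemma swap_blocks_mat_carrier: "swap_blocks_mat n d \<in> carrier_mat (n + d) (d + n)"
  by (simp add: swap_blocks_mat_def)

lemma swap_blocks_mat_mult_four_block_mat:
  assumes "A \<in> carrier_mat d m1" "B \<in> carrier_mat d m2" "C \<in> carrier_mat n m1"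
    "D \<in> carrier_mat n m2"
  shows "swap_blocks_mat n d * four_block_mat A B C D = (four_block_mat C D A B :: 'a :: semiring_1 mat)"
  unfolding swap_blocks_mat_def using assms
  by (simp add: mult_four_block_mat[of _ n d _ n _ d _ _ m1 _ m2])

lemma four_block_mat_mult_swap_blocks_mat:
  assumes "A \<in> carrier_mat r1 d" "B \<in> carrier_mat r1 n" "C \<in> carrier_mat r2 d"
    "D \<in> carrier_mat r2 n"
  shows "four_block_mat A B C D * swap_blocks_mat d n = (four_block_mat B A D C :: 'a :: semiring_1 mat)"
  unfolding swap_blocks_mat_def using assms
  by (simp add: mult_four_block_mat[of _ r1 d _ n _ r2 _ _ n _ d])

lemma swap_blocks_mat_inverse:
  "swap_blocks_mat n d * swap_blocks_mat d n = (1\<^sub>m (n + d) :: 'a :: semiring_1 mat)"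
  unfolding swap_blocks_mat_def[of d n]
  by (subst swap_blocks_mat_mult_four_block_mat[where d = d and n = n]) auto

section \<open>Representations and the quotient\<close>

lemma mem_Rep_iff [simp]:
  "(B, p, q) \<in> Rep N K \<longleftrightarrow> B \<in> carrier_mat N N \<and> p \<in> carrier_mat N K \<and> q \<in> carrier_mat K N"
  by (simp add: Rep_def)

lemma mem_coords_iff [simp]:
  "CB i j \<in> coords N K \<longleftrightarrow> i < N \<and> j < N"
  "CP i a \<in> coords N K \<longleftrightarrow> i < N \<and> a < K"
  "CPb b j \<in> coords N K \<longleftrightarrow> b < K \<and> j < N"
  by (auto simp: coords_def)

lemma coordval_proj:
  "coordval (CB i j) x = fst x $$ (i, j)"
  "coordval (CP i a) x = fst (snd x) $$ (i, a)"
  "coordval (CPb b j) x = snd (snd x) $$ (b, j)"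
  by (cases x; simp)+

lemma finite_coords: "finite (coords N K)"
proof -
  have "coords N K \<subseteq> case_prod CB ` ({..<N} \<times> {..<N}) \<union> case_prod CP ` ({..<N} \<times> {..<K})
      \<union> case_prod CPb ` ({..<K} \<times> {..<N})"
    unfolding coords_def by auto
  then show ?thesis by (rule finite_subset) auto
qed

lemma coords_mono: "N \<le> N' \<Longrightarrow> coords N K \<subseteq> coords N' K"
  unfolding coords_def by auto

lemma Rep_eqI:
  assumes "x \<in> Rep N K" "y \<in> Rep N K"
    and coordval_eq: "\<And>c. c \<in> coords N K \<Longrightarrow> coordval c x = coordval c y"
  shows "x = y"
proof -
  obtain B p q B' p' q' where xy: "x = (B, p, q)" "y = (B', p', q')" by (cases x, cases y)
  have "B = B'" "p = p'" "q = q'"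
    using assms coordval_eq[of "CB _ _"] coordval_eq[of "CP _ _"] coordval_eq[of "CPb _ _"]
    by (auto simp: xy intro!: eq_matI)
  then show ?thesis using xy by simp
qed

lemma act_Rep:
  "x \<in> Rep N K \<Longrightarrow> g \<in> carrier_mat N N \<Longrightarrow> h \<in> carrier_mat N N \<Longrightarrow> act g h x \<in> Rep N K"
  by (cases x) auto

lemma act_one: "x \<in> Rep N K \<Longrightarrow> act (1\<^sub>m N) (1\<^sub>m N) x = x"
  by (cases x) auto

lemma invpoly_act:
  assumes "invpoly N K f" "x \<in> Rep N K" "g \<in> carrier_mat N N" "h \<in> carrier_mat N N" "g * h = 1\<^sub>m N"
  shows "f (act g h x) = f x"
  using assms unfolding invpoly_def by blast

lemma act_qrel:
  assumes "x \<in> Rep N K" "g \<in> carrier_mat N N" "h \<in> carrier_mat N N" "g * h = 1\<^sub>m N"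
  shows "(x, act g h x) \<in> qrel N K"
proof -
  have "f x = f (act g h x)" if "invpoly N K f" for f
    using invpoly_act[OF that assms] by simp
  then show ?thesis using assms act_Rep[OF assms(1-3)] by (simp add: qrel_def)
qed

lemma equiv_qrel: "equiv (Rep N K) (qrel N K)"
  by (auto simp: equiv_def refl_on_def sym_def trans_def qrel_def)

lemma qrel_some_class:
  assumes "x \<in> Rep N K"
  shows "(x, SOME a. a \<in> qrel N K `` {x}) \<in> qrel N K"
proof -
  have "(SOME a. a \<in> qrel N K `` {x}) \<in> qrel N K `` {x}"
    using equiv_class_self[OF equiv_qrel assms] by (rule someI)
  then show ?thesis by simp
qed

lemma qmap_class:
  assumes x: "x \<in> Rep N K" and F: "\<And>a b. (a, b) \<in> qrel N K \<Longrightarrow> (F a, F b) \<in> qrel N' K"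
  shows "qmap N' K F (qrel N K `` {x}) = qrel N' K `` {F x}"
  unfolding qmap_def using F[OF qrel_some_class[OF x]]
  by (rule equiv_class_eq[OF equiv_qrel, symmetric])

lemma qmap2_class:
  assumes x: "x \<in> Rep N1 K" and y: "y \<in> Rep N2 K"
    and F1: "\<And>a b y. y \<in> Rep N2 K \<Longrightarrow> (a, b) \<in> qrel N1 K \<Longrightarrow> (F a y, F b y) \<in> qrel N K"
    and F2: "\<And>a b x. x \<in> Rep N1 K \<Longrightarrow> (a, b) \<in> qrel N2 K \<Longrightarrow> (F x a, F x b) \<in> qrel N K"
  shows "qmap2 N K F (qrel N1 K `` {x}) (qrel N2 K `` {y}) = qrel N K `` {F x y}"
proof -
  define s where "s = (SOME a. a \<in> qrel N1 K `` {x})"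
  define t where "t = (SOME b. b \<in> qrel N2 K `` {y})"
  have xs: "(x, s) \<in> qrel N1 K" and yt: "(y, t) \<in> qrel N2 K"
    unfolding s_def t_def using qrel_some_class x y by blast+
  then have t: "t \<in> Rep N2 K" by (simp add: qrel_def)
  have "qrel N K `` {F s t} = qrel N K `` {F x t}"
    using F1[OF t xs] by (rule equiv_class_eq[OF equiv_qrel, symmetric])
  also have "\<dots> = qrel N K `` {F x y}"
    using F2[OF x yt] by (rule equiv_class_eq[OF equiv_qrel, symmetric])
  finally show ?thesis unfolding qmap2_def s_def t_def .
qed

section \<open>Equivariant polynomial maps descend to the quotient\<close>

definition poly_on :: "nat \<Rightarrow> nat \<Rightarrow> (rep \<Rightarrow> complex) \<Rightarrow> bool" where
  "poly_on N K f \<longleftrightarrow> (\<exists>p\<in>polyfun N K. \<forall>x\<in>Rep N K. f x = p x)"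

lemma poly_on_const: "poly_on N K (\<lambda>x. c)"
  unfolding poly_on_def by (auto intro: polyfun.pf_const)

lemma poly_on_coordval: "c \<in> coords N K \<Longrightarrow> poly_on N K (coordval c)"
  unfolding poly_on_def by (auto intro: polyfun.pf_coord)

lemma poly_on_add: "poly_on N K f \<Longrightarrow> poly_on N K g \<Longrightarrow> poly_on N K (\<lambda>x. f x + g x)"
  unfolding poly_on_def by (metis (no_types, lifting) polyfun.pf_add)

lemma poly_on_mult: "poly_on N K f \<Longrightarrow> poly_on N K g \<Longrightarrow> poly_on N K (\<lambda>x. f x * g x)"
  unfolding poly_on_def by (metis (no_types, lifting) polyfun.pf_mult)

lemma poly_on_cong:
  "poly_on N K f \<Longrightarrow> (\<And>x. x \<in> Rep N K \<Longrightarrow> f x = g x) \<Longrightarrow> poly_on N K g"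
  unfolding poly_on_def by auto

lemma poly_on_uminus: "poly_on N K f \<Longrightarrow> poly_on N K (\<lambda>x. - f x)"
  using poly_on_mult[OF poly_on_const[of N K "-1"]] by simp

lemma poly_on_sum:
  "finite A \<Longrightarrow> (\<And>a. a \<in> A \<Longrightarrow> poly_on N K (f a)) \<Longrightarrow> poly_on N K (\<lambda>x. \<Sum>a\<in>A. f a x)"
proof (induction A rule: finite_induct)
  case empty
  then show ?case using poly_on_const by simp
next
  case (insert a A)
  then show ?case using poly_on_add[of N K "f a"] by simp
qed

lemma poly_on_polyfun_comp:
  assumes "f \<in> polyfun N' K" and "\<And>c. c \<in> coords N' K \<Longrightarrow> poly_on N K (\<lambda>x. coordval c (F x))"
  shows "poly_on N K (\<lambda>x. f (F x))"
  using assms(1) by induction (auto intro: poly_on_const poly_on_add poly_on_mult assms(2))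

definition poly_mat_on :: "nat \<Rightarrow> nat \<Rightarrow> nat \<Rightarrow> nat \<Rightarrow> (rep \<Rightarrow> complex mat) \<Rightarrow> bool" where
  "poly_mat_on N K nr nc M \<longleftrightarrow> (\<forall>x\<in>Rep N K. M x \<in> carrier_mat nr nc)
     \<and> (\<forall>i<nr. \<forall>j<nc. poly_on N K (\<lambda>x. M x $$ (i, j)))"

lemma poly_mat_on_B: "poly_mat_on N K N N fst"
  unfolding poly_mat_on_def by (auto simp: Rep_def simp flip: coordval_proj intro: poly_on_coordval)

lemma poly_mat_on_psi: "poly_mat_on N K N K (\<lambda>x. fst (snd x))"
  unfolding poly_mat_on_def by (auto simp: Rep_def simp flip: coordval_proj intro: poly_on_coordval)

lemma poly_mat_on_psibar: "poly_mat_on N K K N (\<lambda>x. snd (snd x))"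
  unfolding poly_mat_on_def by (auto simp: Rep_def simp flip: coordval_proj intro: poly_on_coordval)

lemma poly_mat_on_const: "A \<in> carrier_mat nr nc \<Longrightarrow> poly_mat_on N K nr nc (\<lambda>x. A)"
  unfolding poly_mat_on_def by (auto intro: poly_on_const)

lemma poly_mat_on_uminus:
  assumes M: "poly_mat_on N K nr nc M"
  shows "poly_mat_on N K nr nc (\<lambda>x. - M x)"
  unfolding poly_mat_on_def
proof (intro conjI ballI allI impI)
  fix x assume "x \<in> Rep N K"
  then show "- M x \<in> carrier_mat nr nc" using M by (simp add: poly_mat_on_def)
next
  fix i j assume ij: "i < nr" "j < nc"
  then have "poly_on N K (\<lambda>x. - (M x $$ (i, j)))"
    using M by (simp add: poly_mat_on_def poly_on_uminus)
  then show "poly_on N K (\<lambda>x. (- M x) $$ (i, j))"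
    by (rule poly_on_cong) (use M ij in \<open>auto simp: poly_mat_on_def\<close>)
qed

lemma poly_mat_on_mult:
  assumes M: "poly_mat_on N K nr n M" and M': "poly_mat_on N K n nc M'"
  shows "poly_mat_on N K nr nc (\<lambda>x. M x * M' x)"
  unfolding poly_mat_on_def
proof (intro conjI ballI allI impI)
  fix x assume "x \<in> Rep N K"
  then show "M x * M' x \<in> carrier_mat nr nc" using M M' by (auto simp: poly_mat_on_def)
next
  fix i j assume ij: "i < nr" "j < nc"
  have "poly_on N K (\<lambda>x. \<Sum>k<n. M x $$ (i, k) * M' x $$ (k, j))"
    using M M' ij by (auto simp: poly_mat_on_def intro!: poly_on_sum poly_on_mult)
  moreover have "(M x * M' x) $$ (i, j) = (\<Sum>k<n. M x $$ (i, k) * M' x $$ (k, j))"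
    if "x \<in> Rep N K" for x
  proof -
    have "M x \<in> carrier_mat nr n" "M' x \<in> carrier_mat n nc"
      using that M M' unfolding poly_mat_on_def by blast+
    then show ?thesis using ij by (simp add: scalar_prod_def lessThan_atLeast0)
  qed
  ultimately show "poly_on N K (\<lambda>x. (M x * M' x) $$ (i, j))"
    by (auto intro: poly_on_cong)
qed

lemma poly_mat_on_four_block:
  assumes "poly_mat_on N K nr1 nc1 A" "poly_mat_on N K nr1 nc2 B"
    "poly_mat_on N K nr2 nc1 C" "poly_mat_on N K nr2 nc2 D"
  shows "poly_mat_on N K (nr1 + nr2) (nc1 + nc2) (\<lambda>x. four_block_mat (A x) (B x) (C x) (D x))"
  unfolding poly_mat_on_def
proof (intro conjI ballI allI impI)
  fix x assume "x \<in> Rep N K"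
  then show "four_block_mat (A x) (B x) (C x) (D x) \<in> carrier_mat (nr1 + nr2) (nc1 + nc2)"
    using assms by (auto simp: poly_mat_on_def)
next
  fix i j assume ij: "i < nr1 + nr2" "j < nc1 + nc2"
  let ?entry = "\<lambda>x. if i < nr1 then if j < nc1 then A x $$ (i, j) else B x $$ (i, j - nc1)
      else if j < nc1 then C x $$ (i - nr1, j) else D x $$ (i - nr1, j - nc1)"
  have "poly_on N K ?entry"
    using assms ij by (cases "i < nr1"; cases "j < nc1") (auto simp: poly_mat_on_def)
  then show "poly_on N K (\<lambda>x. four_block_mat (A x) (B x) (C x) (D x) $$ (i, j))"
  proof (rule poly_on_cong)
    fix x assume "x \<in> Rep N K"
    then have "A x \<in> carrier_mat nr1 nc1" "D x \<in> carrier_mat nr2 nc2"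
      using assms unfolding poly_mat_on_def by blast+
    then show "?entry x = four_block_mat (A x) (B x) (C x) (D x) $$ (i, j)"
      using ij by simp
  qed
qed

definition polynomial_map :: "nat \<Rightarrow> nat \<Rightarrow> nat \<Rightarrow> (rep \<Rightarrow> rep) \<Rightarrow> bool" where
  "polynomial_map N N' K F \<longleftrightarrow> (\<forall>x\<in>Rep N K. F x \<in> Rep N' K)
     \<and> (\<forall>c\<in>coords N' K. poly_on N K (\<lambda>x. coordval c (F x)))"

lemma polynomial_mapI:
  assumes "poly_mat_on N K N' N' (\<lambda>x. fst (F x))" "poly_mat_on N K N' K (\<lambda>x. fst (snd (F x)))"
    "poly_mat_on N K K N' (\<lambda>x. snd (snd (F x)))"
  shows "polynomial_map N N' K F"
  unfolding polynomial_map_def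
proof (intro conjI ballI)
  fix x assume "x \<in> Rep N K"
  then show "F x \<in> Rep N' K" using assms by (cases "F x") (auto simp: poly_mat_on_def)
next
  fix c assume "c \<in> coords N' K"
  then show "poly_on N K (\<lambda>x. coordval c (F x))"
    using assms by (cases c) (auto simp: poly_mat_on_def coordval_proj)
qed

definition equivariant :: "nat \<Rightarrow> nat \<Rightarrow> nat \<Rightarrow> (rep \<Rightarrow> rep) \<Rightarrow> bool" where
  "equivariant N N' K F \<longleftrightarrow> (\<forall>x\<in>Rep N K. \<forall>g h.
     g \<in> carrier_mat N N \<and> h \<in> carrier_mat N N \<and> g * h = 1\<^sub>m N \<longrightarrow>
     (\<exists>g' h'. g' \<in> carrier_mat N' N' \<and> h' \<in> carrier_mat N' N' \<and> g' * h' = 1\<^sub>m N'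
        \<and> F (act g h x) = act g' h' (F x)))"

lemma invpoly_comp:
  assumes F: "polynomial_map N N' K F" "equivariant N N' K F" and f: "invpoly N' K f"
  obtains p where "invpoly N K p" "\<And>x. x \<in> Rep N K \<Longrightarrow> f (F x) = p x"
proof -
  obtain p where p: "p \<in> polyfun N K" and fF: "\<And>x. x \<in> Rep N K \<Longrightarrow> f (F x) = p x"
    using poly_on_polyfun_comp[of f N' K N F] F(1) f
    by (auto simp: polynomial_map_def invpoly_def poly_on_def)
  have "p (act g h x) = p x"
    if x: "x \<in> Rep N K" and gh: "g \<in> carrier_mat N N" "h \<in> carrier_mat N N" "g * h = 1\<^sub>m N"
    for x g h
  proof -
    obtain g' h' where g'h': "g' \<in> carrier_mat N' N'" "h' \<in> carrier_mat N' N'" "g' * h' = 1\<^sub>m N'"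
      and F_act: "F (act g h x) = act g' h' (F x)"
      using F(2) x gh unfolding equivariant_def by blast
    have "p (act g h x) = f (act g' h' (F x))"
      using fF[OF act_Rep[OF x gh(1,2)]] F_act by simp
    also have "\<dots> = f (F x)"
      using invpoly_act[OF f _ g'h'] F(1) x by (simp add: polynomial_map_def)
    finally show ?thesis using fF[OF x] by simp
  qed
  then have "invpoly N K p" using p by (simp add: invpoly_def)
  then show ?thesis using fF that by blast
qed

lemma equivariant_polynomial_map_qrel:
  assumes "polynomial_map N N' K F" "equivariant N N' K F" and xy: "(x, y) \<in> qrel N K"
  shows "(F x, F y) \<in> qrel N' K"
proof -
  have xy': "x \<in> Rep N K" "y \<in> Rep N K" using xy by (auto simp: qrel_def)
  have "f (F x) = f (F y)" if f: "invpoly N' K f" for f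
  proof -
    obtain p where "invpoly N K p" "\<And>x. x \<in> Rep N K \<Longrightarrow> f (F x) = p x"
      using invpoly_comp[OF assms(1,2) f] by blast
    then show ?thesis using xy xy' by (simp add: qrel_def)
  qed
  then show ?thesis using assms(1) xy' by (simp add: qrel_def polynomial_map_def)
qed

section \<open>The fusion product\<close>

definition zero_rep :: "nat \<Rightarrow> nat \<Rightarrow> rep" where
  "zero_rep n K = (0\<^sub>m n n, 0\<^sub>m n K, 0\<^sub>m K n)"

lemma zero_rep_Rep: "zero_rep n K \<in> Rep n K"
  by (simp add: zero_rep_def)

lemma mmap_Rep: "x \<in> Rep N1 K \<Longrightarrow> y \<in> Rep N2 K \<Longrightarrow> mmap N1 N2 K x y \<in> Rep (N1 + N2) K"
  by (cases x; cases y) auto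

lemma mmap_eq_four_block_mat:
  "mmap N1 N2 K x y =
    (four_block_mat (fst x) (fst (snd x) * snd (snd y)) (- (fst (snd y) * snd (snd x))) (fst y),
     four_block_mat (fst (snd x)) (0\<^sub>m N1 0) (fst (snd y)) (0\<^sub>m N2 0),
     four_block_mat (snd (snd x)) (snd (snd y)) (0\<^sub>m 0 N1) (0\<^sub>m 0 N2))"
  by (cases x, cases y) simp

lemma iota_eq_mmap_zero_rep:
  "x \<in> Rep N K \<Longrightarrow> iota N N' K x = mmap N (N' - N) K x (zero_rep (N' - N) K)"
  by (cases x) (auto simp: zero_rep_def)

lemma iota_Rep: "x \<in> Rep N K \<Longrightarrow> N \<le> N' \<Longrightarrow> iota N N' K x \<in> Rep N' K"
  using mmap_Rep[OF _ zero_rep_Rep, of x N K "N' - N"] by (simp add: iota_eq_mmap_zero_rep)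

lemma mmap_zero_rep: "mmap d1 d2 K (zero_rep d1 K) (zero_rep d2 K) = zero_rep (d1 + d2) K"
  by (simp add: zero_rep_def)

lemma mmap_assoc:
  assumes "x \<in> Rep N1 K" "y \<in> Rep N2 K" "z \<in> Rep N3 K"
  shows "mmap (N1 + N2) N3 K (mmap N1 N2 K x y) z = mmap N1 (N2 + N3) K x (mmap N2 N3 K y z)"
proof -
  obtain B1 p1 q1 B2 p2 q2 B3 p3 q3
    where xyz: "x = (B1, p1, q1)" "y = (B2, p2, q2)" "z = (B3, p3, q3)"
    by (cases x, cases y, cases z)
  have c: "B1 \<in> carrier_mat N1 N1" "p1 \<in> carrier_mat N1 K" "q1 \<in> carrier_mat K N1"
    "B2 \<in> carrier_mat N2 N2" "p2 \<in> carrier_mat N2 K" "q2 \<in> carrier_mat K N2"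
    "B3 \<in> carrier_mat N3 N3" "p3 \<in> carrier_mat N3 K" "q3 \<in> carrier_mat K N3"
    using assms xyz by auto
  have "four_block_mat p1 (0\<^sub>m N1 0) p2 (0\<^sub>m N2 0) * q3
      = four_block_mat (p1 * q3) (0\<^sub>m N1 0) (p2 * q3) (0\<^sub>m N2 0)"
    by (rule four_block_mat_column_mult[OF c(2,5,9)])
  moreover have "- (p3 * four_block_mat q1 q2 (0\<^sub>m 0 N1) (0\<^sub>m 0 N2))
      = four_block_mat (- (p3 * q1)) (- (p3 * q2)) (0\<^sub>m 0 N1) (0\<^sub>m 0 N2)"
    using uminus_four_block_mat[of "p3 * q1" N3 N1 "p3 * q2" N2 "0\<^sub>m 0 N1" 0 "0\<^sub>m 0 N2"] c
    by (simp add: mult_four_block_mat_row[OF c(8,3,6)])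
  moreover have "p1 * four_block_mat q2 q3 (0\<^sub>m 0 N2) (0\<^sub>m 0 N3)
      = four_block_mat (p1 * q2) (p1 * q3) (0\<^sub>m 0 N2) (0\<^sub>m 0 N3)"
    by (rule mult_four_block_mat_row[OF c(2,6,9)])
  moreover have "- (four_block_mat p2 (0\<^sub>m N2 0) p3 (0\<^sub>m N3 0) * q1)
      = four_block_mat (- (p2 * q1)) (0\<^sub>m N2 0) (- (p3 * q1)) (0\<^sub>m N3 0)"
    using uminus_four_block_mat[of "p2 * q1" N2 N1 "0\<^sub>m N2 0" 0 "p3 * q1" N3 "0\<^sub>m N3 0"] c
    by (simp add: four_block_mat_column_mult[OF c(5,8,3)])
  moreover have "four_block_mat (four_block_mat p1 (0\<^sub>m N1 0) p2 (0\<^sub>m N2 0)) (0\<^sub>m (N1 + N2) 0)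
        p3 (0\<^sub>m N3 0)
      = four_block_mat p1 (0\<^sub>m N1 0) (four_block_mat p2 (0\<^sub>m N2 0) p3 (0\<^sub>m N3 0))
        (0\<^sub>m (N2 + N3) 0)"
    by (rule eq_matI) (use c in \<open>auto simp: not_less less_diff_conv2 diff_diff_left\<close>)
  moreover have "four_block_mat (four_block_mat q1 q2 (0\<^sub>m 0 N1) (0\<^sub>m 0 N2)) q3
        (0\<^sub>m 0 (N1 + N2)) (0\<^sub>m 0 N3)
      = four_block_mat q1 (four_block_mat q2 q3 (0\<^sub>m 0 N2) (0\<^sub>m 0 N3))
        (0\<^sub>m 0 N1) (0\<^sub>m 0 (N2 + N3))"
    by (rule eq_matI) (use c in \<open>auto simp: not_less less_diff_conv2 diff_diff_left\<close>)
  ultimately show ?thesis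
    unfolding xyz mmap.simps using c by (simp add: four_block_mat_assoc)
qed

lemma mmap_act:
  assumes x: "x \<in> Rep N1 K" and y: "y \<in> Rep N2 K"
    and g: "g1 \<in> carrier_mat N1 N1" "h1 \<in> carrier_mat N1 N1"
      "g2 \<in> carrier_mat N2 N2" "h2 \<in> carrier_mat N2 N2"
  shows "mmap N1 N2 K (act g1 h1 x) (act g2 h2 y)
    = act (diag_block_mat [g1, g2]) (diag_block_mat [h1, h2]) (mmap N1 N2 K x y)"
proof -
  obtain B1 p1 q1 B2 p2 q2 where xy: "x = (B1, p1, q1)" "y = (B2, p2, q2)" by (cases x, cases y)
  have c: "B1 \<in> carrier_mat N1 N1" "p1 \<in> carrier_mat N1 K" "q1 \<in> carrier_mat K N1"
    "B2 \<in> carrier_mat N2 N2" "p2 \<in> carrier_mat N2 K" "q2 \<in> carrier_mat K N2"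
    using x y xy by auto
  have assoc: "g * (p * q) * h = g * p * (q * h)"
    if "g \<in> carrier_mat n n" "p \<in> carrier_mat n K" "q \<in> carrier_mat K m" "h \<in> carrier_mat m m"
    for g p q h :: "complex mat" and n m
    by (simp only: assoc_mult_mat[OF that(1) mult_carrier_mat[OF that(2,3)] that(4)]
      assoc_mult_mat[OF that(2-4)] assoc_mult_mat[OF that(1,2) mult_carrier_mat[OF that(3,4)]])
  have "g1 * (p1 * q2) * h2 = g1 * p1 * (q2 * h2)" using assoc c g by blast
  moreover have "g2 * - (p2 * q1) * h1 = - (g2 * p2 * (q1 * h1))"
    using assoc[OF g(3) c(5,3) g(2)] c g by simp
  ultimately show ?thesis
    unfolding xy act.simps mmap.simps using c g
    by (simp add: diag_block_mat_mult_four_block_mat[of g1 N1 g2 N2 _ K _ 0]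
      diag_block_mat_mult_four_block_mat[of g1 N1 g2 N2 _ N1 _ N2]
      four_block_mat_mult_diag_block_mat[of h1 N1 h2 N2 _ K _ _ 0]
      four_block_mat_mult_diag_block_mat[of h1 N1 h2 N2 _ N1 _ _ N2]
      del: diag_block_mat.simps)
qed

lemma polynomial_map_mmap_left:
  assumes y: "y \<in> Rep N2 K"
  shows "polynomial_map N1 (N1 + N2) K (\<lambda>x. mmap N1 N2 K x y)"
proof -
  obtain B2 p2 q2 where y_eq: "y = (B2, p2, q2)" by (cases y)
  have c: "B2 \<in> carrier_mat N2 N2" "p2 \<in> carrier_mat N2 K" "q2 \<in> carrier_mat K N2"
    using y y_eq by auto
  have "poly_mat_on N1 K (N1 + N2) (N1 + N2)
      (\<lambda>x. four_block_mat (fst x) (fst (snd x) * q2) (- (p2 * snd (snd x))) B2)"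
    by (intro poly_mat_on_four_block poly_mat_on_B poly_mat_on_const c poly_mat_on_uminus
        poly_mat_on_mult[OF poly_mat_on_psi poly_mat_on_const[OF c(3)]]
        poly_mat_on_mult[OF poly_mat_on_const[OF c(2)] poly_mat_on_psibar])
  moreover have "poly_mat_on N1 K (N1 + N2) (K + 0)
      (\<lambda>x. four_block_mat (fst (snd x)) (0\<^sub>m N1 0) p2 (0\<^sub>m N2 0))"
    by (intro poly_mat_on_four_block poly_mat_on_const poly_mat_on_psi c zero_carrier_mat)
  moreover have "poly_mat_on N1 K (K + 0) (N1 + N2)
      (\<lambda>x. four_block_mat (snd (snd x)) q2 (0\<^sub>m 0 N1) (0\<^sub>m 0 N2))"
    by (intro poly_mat_on_four_block poly_mat_on_const poly_mat_on_psibar c zero_carrier_mat)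
  ultimately show ?thesis
    unfolding mmap_eq_four_block_mat y_eq by (intro polynomial_mapI) simp_all
qed

lemma polynomial_map_mmap_right:
  assumes x: "x \<in> Rep N1 K"
  shows "polynomial_map N2 (N1 + N2) K (\<lambda>y. mmap N1 N2 K x y)"
proof -
  obtain B1 p1 q1 where x_eq: "x = (B1, p1, q1)" by (cases x)
  have c: "B1 \<in> carrier_mat N1 N1" "p1 \<in> carrier_mat N1 K" "q1 \<in> carrier_mat K N1"
    using x x_eq by auto
  have "poly_mat_on N2 K (N1 + N2) (N1 + N2)
      (\<lambda>y. four_block_mat B1 (p1 * snd (snd y)) (- (fst (snd y) * q1)) (fst y))"
    by (intro poly_mat_on_four_block poly_mat_on_B poly_mat_on_const c poly_mat_on_uminus
        poly_mat_on_mult[OF poly_mat_on_const[OF c(2)] poly_mat_on_psibar]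
        poly_mat_on_mult[OF poly_mat_on_psi poly_mat_on_const[OF c(3)]])
  moreover have "poly_mat_on N2 K (N1 + N2) (K + 0)
      (\<lambda>y. four_block_mat p1 (0\<^sub>m N1 0) (fst (snd y)) (0\<^sub>m N2 0))"
    by (intro poly_mat_on_four_block poly_mat_on_const poly_mat_on_psi c zero_carrier_mat)
  moreover have "poly_mat_on N2 K (K + 0) (N1 + N2)
      (\<lambda>y. four_block_mat q1 (snd (snd y)) (0\<^sub>m 0 N1) (0\<^sub>m 0 N2))"
    by (intro poly_mat_on_four_block poly_mat_on_const poly_mat_on_psibar c zero_carrier_mat)
  ultimately show ?thesis
    unfolding mmap_eq_four_block_mat x_eq by (intro polynomial_mapI) simp_all
qed

lemma equivariant_mmap_left:
  assumes y: "y \<in> Rep N2 K"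
  shows "equivariant N1 (N1 + N2) K (\<lambda>x. mmap N1 N2 K x y)"
  unfolding equivariant_def
proof (intro ballI allI impI)
  fix x and g h :: "complex mat"
  assume x: "x \<in> Rep N1 K" and gh: "g \<in> carrier_mat N1 N1 \<and> h \<in> carrier_mat N1 N1 \<and> g * h = 1\<^sub>m N1"
  have one: "(1\<^sub>m N2 :: complex mat) \<in> carrier_mat N2 N2" by simp
  let ?g = "diag_block_mat [g, 1\<^sub>m N2]" and ?h = "diag_block_mat [h, 1\<^sub>m N2]"
  show "\<exists>g' h'. g' \<in> carrier_mat (N1 + N2) (N1 + N2) \<and> h' \<in> carrier_mat (N1 + N2) (N1 + N2)
      \<and> g' * h' = 1\<^sub>m (N1 + N2) \<and> mmap N1 N2 K (act g h x) y = act g' h' (mmap N1 N2 K x y)"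
  proof (intro exI conjI)
    show "?g * ?h = 1\<^sub>m (N1 + N2)"
      using gh diag_block_mat_pair_mult[OF _ one _ one, of g N1 h]
      by (simp add: diag_block_mat_pair_one del: diag_block_mat.simps)
    show "mmap N1 N2 K (act g h x) y = act ?g ?h (mmap N1 N2 K x y)"
      using mmap_act[OF x y _ _ one one, of g h] act_one[OF y] gh by simp
  qed (use gh in \<open>simp_all add: diag_block_mat_pair_carrier del: diag_block_mat.simps\<close>)
qed

lemma equivariant_mmap_right:
  assumes x: "x \<in> Rep N1 K"
  shows "equivariant N2 (N1 + N2) K (\<lambda>y. mmap N1 N2 K x y)"
  unfolding equivariant_def
proof (intro ballI allI impI)
  fix y and g h :: "complex mat"
  assume y: "y \<in> Rep N2 K" and gh: "g \<in> carrier_mat N2 N2 \<and> h \<in> carrier_mat N2 N2 \<and> g * h = 1\<^sub>m N2"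
  have one: "(1\<^sub>m N1 :: complex mat) \<in> carrier_mat N1 N1" by simp
  let ?g = "diag_block_mat [1\<^sub>m N1, g]" and ?h = "diag_block_mat [1\<^sub>m N1, h]"
  show "\<exists>g' h'. g' \<in> carrier_mat (N1 + N2) (N1 + N2) \<and> h' \<in> carrier_mat (N1 + N2) (N1 + N2)
      \<and> g' * h' = 1\<^sub>m (N1 + N2) \<and> mmap N1 N2 K x (act g h y) = act g' h' (mmap N1 N2 K x y)"
  proof (intro exI conjI)
    show "?g * ?h = 1\<^sub>m (N1 + N2)"
      using gh diag_block_mat_pair_mult[OF one _ one, of g N2 h]
      by (simp add: diag_block_mat_pair_one del: diag_block_mat.simps)
    show "mmap N1 N2 K x (act g h y) = act ?g ?h (mmap N1 N2 K x y)"
      using mmap_act[OF x y one one, of g h] act_one[OF x] gh by simp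
  qed (use gh in \<open>simp_all add: diag_block_mat_pair_carrier del: diag_block_mat.simps\<close>)
qed

lemma mmap_qrel_left:
  "y \<in> Rep N2 K \<Longrightarrow> (x, x') \<in> qrel N1 K \<Longrightarrow>
    (mmap N1 N2 K x y, mmap N1 N2 K x' y) \<in> qrel (N1 + N2) K"
  using equivariant_polynomial_map_qrel[OF polynomial_map_mmap_left equivariant_mmap_left] .

lemma mmap_qrel_right:
  "x \<in> Rep N1 K \<Longrightarrow> (y, y') \<in> qrel N2 K \<Longrightarrow>
    (mmap N1 N2 K x y, mmap N1 N2 K x y') \<in> qrel (N1 + N2) K"
  using equivariant_polynomial_map_qrel[OF polynomial_map_mmap_right equivariant_mmap_right] .

lemma iota_qrel:
  assumes "N \<le> N'" and xx': "(x, x') \<in> qrel N K"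
  shows "(iota N N' K x, iota N N' K x') \<in> qrel N' K"
proof -
  have "x \<in> Rep N K" "x' \<in> Rep N K" using xx' by (auto simp: qrel_def)
  then show ?thesis
    using mmap_qrel_left[OF zero_rep_Rep xx', of "N' - N"] assms(1)
    by (simp add: iota_eq_mmap_zero_rep)
qed

lemma act_swap_mmap_zero_rep:
  assumes y: "y \<in> Rep n K"
  shows "act (swap_blocks_mat n d) (swap_blocks_mat d n) (mmap d n K (zero_rep d K) y)
    = mmap n d K y (zero_rep d K)"
proof -
  obtain B p q where y_eq: "y = (B, p, q)" by (cases y)
  have c: "B \<in> carrier_mat n n" "p \<in> carrier_mat n K" "q \<in> carrier_mat K n"
    using y y_eq by auto
  have "swap_blocks_mat n d * four_block_mat (0\<^sub>m d d) (0\<^sub>m d n) (0\<^sub>m n d) B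
      = four_block_mat (0\<^sub>m n d) B (0\<^sub>m d d) (0\<^sub>m d n)"
    by (rule swap_blocks_mat_mult_four_block_mat) (use c in auto)
  moreover have "four_block_mat (0\<^sub>m n d) B (0\<^sub>m d d) (0\<^sub>m d n) * swap_blocks_mat d n
      = four_block_mat B (0\<^sub>m n d) (0\<^sub>m d n) (0\<^sub>m d d)"
    by (rule four_block_mat_mult_swap_blocks_mat) (use c in auto)
  moreover have "swap_blocks_mat n d * four_block_mat (0\<^sub>m d K) (0\<^sub>m d 0) p (0\<^sub>m n 0)
      = four_block_mat p (0\<^sub>m n 0) (0\<^sub>m d K) (0\<^sub>m d 0)"
    by (rule swap_blocks_mat_mult_four_block_mat) (use c in auto)
  moreover have "four_block_mat (0\<^sub>m K d) q (0\<^sub>m 0 d) (0\<^sub>m 0 n) * swap_blocks_mat d n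
      = four_block_mat q (0\<^sub>m K d) (0\<^sub>m 0 n) (0\<^sub>m 0 d)"
    by (rule four_block_mat_mult_swap_blocks_mat) (use c in auto)
  ultimately show ?thesis
    using c unfolding y_eq zero_rep_def act.simps mmap.simps by simp
qed

lemma mmap_zero_rep_comm_qrel:
  assumes y: "y \<in> Rep n K"
  shows "(mmap d n K (zero_rep d K) y, mmap n d K y (zero_rep d K)) \<in> qrel (d + n) K"
proof -
  have "swap_blocks_mat n d \<in> carrier_mat (d + n) (d + n)"
    "swap_blocks_mat d n \<in> carrier_mat (d + n) (d + n)"
    "swap_blocks_mat n d * swap_blocks_mat d n = (1\<^sub>m (d + n) :: complex mat)"
    using swap_blocks_mat_carrier[of n d] swap_blocks_mat_carrier[of d n]
      swap_blocks_mat_inverse[of n d]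
    by (simp_all add: add.commute)
  from act_qrel[OF mmap_Rep[OF zero_rep_Rep y] this] show ?thesis
    by (simp add: act_swap_mmap_zero_rep[OF y])
qed

lemma iota_iota:
  assumes x: "x \<in> Rep N K" and "N \<le> N'" "N' \<le> N''"
  shows "iota N' N'' K (iota N N' K x) = iota N N'' K x"
proof -
  obtain d1 d2 where N': "N' = N + d1" and N'': "N'' = N + d1 + d2"
    using assms(2,3) by (metis le_iff_add)
  have "iota N' N'' K (iota N N' K x)
      = mmap (N + d1) d2 K (mmap N d1 K x (zero_rep d1 K)) (zero_rep d2 K)"
    using mmap_Rep[OF x zero_rep_Rep] by (simp add: N' N'' x iota_eq_mmap_zero_rep)
  also have "\<dots> = mmap N (d1 + d2) K x (zero_rep (d1 + d2) K)"
    by (simp add: mmap_assoc x zero_rep_Rep mmap_zero_rep)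
  also have "\<dots> = iota N N'' K x"
    by (simp add: N'' x iota_eq_mmap_zero_rep)
  finally show ?thesis .
qed

(* With 0 the zero points of the padding sizes, associativity gives
   m(iota x1, iota x2) = m(x1, m(0, m(x2, 0))) and iota (m(x1, x2)) = m(x1, m(x2, 0)),
   so it only remains to move the padding block in front of x2 behind it. *)
lemma mmap_iota_qrel:
  assumes x1: "x1 \<in> Rep N1 K" and x2: "x2 \<in> Rep N2 K" and "N1 \<le> N1'" "N2 \<le> N2'"
  shows "(mmap N1' N2' K (iota N1 N1' K x1) (iota N2 N2' K x2),
          iota (N1 + N2) (N1' + N2') K (mmap N1 N2 K x1 x2)) \<in> qrel (N1' + N2') K"
proof -
  obtain d1 d2 where N1': "N1' = N1 + d1" and N2': "N2' = N2 + d2"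
    using assms(3,4) by (metis le_iff_add)
  let ?z = "\<lambda>d. zero_rep d K"
  have z: "?z d \<in> Rep d K" for d by (rule zero_rep_Rep)
  define inner where "inner = mmap d1 (N2 + d2) K (?z d1) (mmap N2 d2 K x2 (?z d2))"
  have "(inner, mmap (d1 + N2) d2 K (mmap N2 d1 K x2 (?z d1)) (?z d2)) \<in> qrel (d1 + N2 + d2) K"
    unfolding inner_def mmap_assoc[OF z x2 z, symmetric]
    by (rule mmap_qrel_left[OF z mmap_zero_rep_comm_qrel[OF x2]])
  also have "mmap (d1 + N2) d2 K (mmap N2 d1 K x2 (?z d1)) (?z d2)
      = mmap N2 (d1 + d2) K x2 (?z (d1 + d2))"
    using mmap_assoc[OF x2 z z, of d1 d2] by (simp add: add.commute mmap_zero_rep)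
  finally have "(inner, mmap N2 (d1 + d2) K x2 (?z (d1 + d2))) \<in> qrel (d1 + (N2 + d2)) K"
    by (simp add: add.assoc)
  from mmap_qrel_right[OF x1 this]
  have "(mmap N1 (d1 + (N2 + d2)) K x1 inner,
        mmap N1 (N2 + (d1 + d2)) K x1 (mmap N2 (d1 + d2) K x2 (?z (d1 + d2))))
      \<in> qrel (N1 + (d1 + (N2 + d2))) K"
    by (simp add: ac_simps)
  moreover have "mmap N1' N2' K (iota N1 N1' K x1) (iota N2 N2' K x2)
      = mmap N1 (d1 + (N2 + d2)) K x1 inner"
    unfolding inner_def N1' N2' using x1 x2
    by (simp add: iota_eq_mmap_zero_rep mmap_assoc z mmap_Rep)
  moreover have "iota (N1 + N2) (N1' + N2') K (mmap N1 N2 K x1 x2)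
      = mmap N1 (N2 + (d1 + d2)) K x1 (mmap N2 (d1 + d2) K x2 (?z (d1 + d2)))"
    unfolding N1' N2' using x1 x2
    by (simp add: iota_eq_mmap_zero_rep mmap_assoc z mmap_Rep ac_simps)
  ultimately show ?thesis unfolding N1' N2' by (simp add: ac_simps)
qed

lemma qmap_iota_iota:
  assumes "N \<le> N'" "N' \<le> N''" "X \<in> Mq N K"
  shows "qmap N'' K (iota N' N'' K) (qmap N' K (iota N N' K) X) = qmap N'' K (iota N N'' K) X"
proof -
  from \<open>X \<in> Mq N K\<close> obtain x where X: "X = qrel N K `` {x}" and x: "x \<in> Rep N K"
    unfolding Mq_def by (rule quotientE)
  show ?thesis
    unfolding X using x assms by (simp add: qmap_class iota_qrel iota_Rep iota_iota)
qed

lemma qmap2_mmap_qmap_iota: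
  assumes N: "N1 \<le> N1'" "N2 \<le> N2'" and "X1 \<in> Mq N1 K" "X2 \<in> Mq N2 K"
  shows "qmap2 (N1' + N2') K (mmap N1' N2' K) (qmap N1' K (iota N1 N1' K) X1)
      (qmap N2' K (iota N2 N2' K) X2)
    = qmap (N1' + N2') K (iota (N1 + N2) (N1' + N2') K) (qmap2 (N1 + N2) K (mmap N1 N2 K) X1 X2)"
proof -
  from \<open>X1 \<in> Mq N1 K\<close> obtain x1 where X1: "X1 = qrel N1 K `` {x1}" and x1: "x1 \<in> Rep N1 K"
    unfolding Mq_def by (rule quotientE)
  from \<open>X2 \<in> Mq N2 K\<close> obtain x2 where X2: "X2 = qrel N2 K `` {x2}" and x2: "x2 \<in> Rep N2 K"
    unfolding Mq_def by (rule quotientE)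
  have "qrel (N1' + N2') K `` {mmap N1' N2' K (iota N1 N1' K x1) (iota N2 N2' K x2)}
      = qrel (N1' + N2') K `` {iota (N1 + N2) (N1' + N2') K (mmap N1 N2 K x1 x2)}"
    by (rule equiv_class_eq[OF equiv_qrel mmap_iota_qrel[OF x1 x2 N]])
  then show ?thesis
    unfolding X1 X2 using x1 x2 N
    by (simp add: qmap_class qmap2_class iota_qrel mmap_qrel_left mmap_qrel_right iota_Rep mmap_Rep)
qed

section \<open>Partial derivatives of invariant polynomials\<close>

lemma bump_Rep: "x \<in> Rep N K \<Longrightarrow> bump x c t \<in> Rep N K"
  by (cases x; cases c) (auto simp: emat_def)

lemma coordval_bump:
  assumes "x \<in> Rep N K" "c \<in> coords N K" "c' \<in> coords N K"
  shows "coordval c' (bump x c t) = coordval c' x + (if c' = c then t else 0)"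
  using assms by (cases x; cases c; cases c') (auto simp: emat_def)

lemma polyfun_bump_differentiable:
  assumes "f \<in> polyfun N K" "x \<in> Rep N K" "c \<in> coords N K"
  shows "\<exists>D. ((\<lambda>t. f (bump x c t)) has_field_derivative D) (at 0)"
  using assms(1)
proof induction
  case (pf_coord c')
  then show ?case
    by (cases "c' = c") (auto simp: coordval_bump[OF assms(2,3)] intro!: derivative_eq_intros)
next
  case (pf_add f g)
  then show ?case using DERIV_add by blast
next
  case (pf_mult f g)
  then show ?case using DERIV_mult by blast
qed (use DERIV_const in blast)

lemma pd_has_field_derivative:
  assumes "f \<in> polyfun N K" "x \<in> Rep N K" "c \<in> coords N K"
  shows "((\<lambda>t. f (bump x c t)) has_field_derivative pd f c x) (at 0)"
  unfolding pd_def using polyfun_bump_differentiable[OF assms] by (rule someI_ex)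

lemma pd_eq_0_if_scaling_invariant:
  assumes f: "f \<in> polyfun N K" and x: "x \<in> Rep N K" and c: "c \<in> coords N K"
    and w: "w \<noteq> 1" and inv: "\<And>t. f (bump x c (w * t)) = f (bump x c t)"
  shows "pd f c x = 0"
proof -
  let ?D = "pd f c x"
  have D: "((\<lambda>t. f (bump x c t)) has_field_derivative ?D) (at 0)"
    by (rule pd_has_field_derivative[OF f x c])
  have "((\<lambda>t. f (bump x c (w * t))) has_field_derivative ?D * w) (at 0)"
    using DERIV_chain2[of "\<lambda>t. f (bump x c t)" ?D "\<lambda>t. w * t" 0 w] D
    by (auto intro!: derivative_eq_intros)
  then have "((\<lambda>t. f (bump x c t)) has_field_derivative ?D * w) (at 0)" using inv by simp
  then have "?D * w = ?D" using D DERIV_unique by blast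
  then show ?thesis using w by (metis mult.right_neutral mult_cancel_left)
qed

fun weight :: "(nat \<Rightarrow> complex) \<Rightarrow> (nat \<Rightarrow> complex) \<Rightarrow> coord \<Rightarrow> complex" where
  "weight d e (CB m l) = d m * e l"
| "weight d e (CP i a) = d i"
| "weight d e (CPb b j) = e j"

lemma coordval_act_mat_diag:
  assumes "y \<in> Rep n K" "c \<in> coords n K"
  shows "coordval c (act (mat_diag n d) (mat_diag n e) y) = weight d e c * coordval c y"
  using assms by (cases y; cases c)
    (auto simp: mat_diag_mult_left mat_diag_mult_right[OF mat_carrier] mat_diag_mult_right[of _ K n])

lemma act_mat_diag_bump:
  assumes y: "y \<in> Rep n K" and c: "c \<in> coords n K"
    and fixed: "act (mat_diag n d) (mat_diag n e) y = y"
  shows "act (mat_diag n d) (mat_diag n e) (bump y c t) = bump y c (weight d e c * t)"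
proof (rule Rep_eqI)
  fix c' assume c': "c' \<in> coords n K"
  have fixed_coord: "weight d e c' * coordval c' y = coordval c' y"
    using coordval_act_mat_diag[OF y c', of d e] fixed by simp
  have "coordval c' (act (mat_diag n d) (mat_diag n e) (bump y c t))
      = weight d e c' * (coordval c' y + (if c' = c then t else 0))"
    by (simp add: coordval_act_mat_diag[OF bump_Rep[OF y] c'] coordval_bump[OF y c c'])
  also have "\<dots> = weight d e c' * coordval c' y + (if c' = c then weight d e c * t else 0)"
    by (simp add: distrib_left)
  also have "\<dots> = coordval c' y + (if c' = c then weight d e c * t else 0)"
    unfolding fixed_coord ..
  also have "\<dots> = coordval c' (bump y c (weight d e c * t))"
    by (simp add: coordval_bump[OF y c c'])
  finally show "coordval c' (act (mat_diag n d) (mat_diag n e) (bump y c t))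
      = coordval c' (bump y c (weight d e c * t))" .
qed (simp_all add: act_Rep bump_Rep y)

lemma pd_invpoly_eq_0:
  assumes f: "invpoly n K f" and y: "y \<in> Rep n K" and c: "c \<in> coords n K"
    and fixed: "act (mat_diag n d) (mat_diag n e) y = y" and de: "\<And>i. d i * e i = 1"
    and w: "weight d e c \<noteq> 1"
  shows "pd f c y = 0"
proof (rule pd_eq_0_if_scaling_invariant[OF _ y c w])
  show "f \<in> polyfun n K" using f by (simp add: invpoly_def)
  have one: "mat_diag n d * mat_diag n e = 1\<^sub>m n" using de by simp
  fix t
  have "f (bump y c (weight d e c * t)) = f (act (mat_diag n d) (mat_diag n e) (bump y c t))"
    by (simp add: act_mat_diag_bump[OF y c fixed])
  also have "\<dots> = f (bump y c t)"
    by (rule invpoly_act[OF f bump_Rep[OF y] mat_diag_dim mat_diag_dim one])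
  finally show "f (bump y c (weight d e c * t)) = f (bump y c t)" .
qed

section \<open>The embedding is Poisson\<close>

lemma coordval_iota:
  assumes "x \<in> Rep N K" "N \<le> N'" "c \<in> coords N' K"
  shows "coordval c (iota N N' K x) = (if c \<in> coords N K then coordval c x else 0)"
  using assms by (cases x; cases c) auto

lemma iota_bump:
  assumes x: "x \<in> Rep N K" and N: "N \<le> N'" and c: "c \<in> coords N K"
  shows "iota N N' K (bump x c t) = bump (iota N N' K x) c t"
proof (rule Rep_eqI)
  have cN': "c \<in> coords N' K" using coords_mono[OF N] c by blast
  fix c' assume c': "c' \<in> coords N' K"
  show "coordval c' (iota N N' K (bump x c t)) = coordval c' (bump (iota N N' K x) c t)"
    using c by (simp add: coordval_iota[OF bump_Rep[OF x] N c'] coordval_iota[OF x N c']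
      coordval_bump[OF iota_Rep[OF x N] cN' c'] coordval_bump[OF x c])
qed (simp_all add: bump_Rep iota_Rep x N)

lemma pd_iota:
  assumes "x \<in> Rep N K" "N \<le> N'" "c \<in> coords N K"
  shows "pd (\<lambda>y. f (iota N N' K y)) c x = pd f c (iota N N' K x)"
  unfolding pd_def using iota_bump[OF assms] by simp

lemma cbr_iota:
  assumes "x \<in> Rep N K" "N \<le> N'" "c \<in> coords N K" "c' \<in> coords N K"
  shows "cbr K c c' (iota N N' K x) = cbr K c c' x"
proof -
  obtain B p q where x: "x = (B, p, q)" by (cases x)
  have "dim_row p = N" "dim_col p = K" "dim_row q = K" "dim_col q = N"
    using assms(1) x by auto
  then show ?thesis using assms(2-4) x by (cases c; cases c') simp_all
qed

lemma cbr_CB_diag_eq_0: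
  assumes "\<And>a. a < K \<Longrightarrow> coordval (CP k a) y = 0" "\<And>a. a < K \<Longrightarrow> coordval (CPb a k) y = 0"
  shows "cbr K (CB k k) c y = 0" "cbr K c (CB k k) y = 0"
proof -
  obtain B p q where y: "y = (B, p, q)" by (cases y)
  have p0: "p $$ (i, a) = 0" if "i = k" "a < K" for i a
    using assms(1)[OF that(2)] that(1) y by simp
  have q0: "q $$ (a, j) = 0" if "j = k" "a < K" for a j
    using assms(2)[OF that(2)] that(1) y by simp
  show "cbr K (CB k k) c y = 0" unfolding y by (cases c) (simp_all add: p0 q0)
  show "cbr K c (CB k k) y = 0" unfolding y by (cases c) (simp_all add: p0 q0)
qed

lemma act_mat_diag_iota:
  assumes x: "x \<in> Rep N K" and N: "N \<le> N'" and de: "\<And>i. i < N \<Longrightarrow> d i = 1 \<and> e i = 1"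
  shows "act (mat_diag N' d) (mat_diag N' e) (iota N N' K x) = iota N N' K x"
proof (rule Rep_eqI)
  fix c assume c: "c \<in> coords N' K"
  have "weight d e c = 1" if "c \<in> coords N K" using that de by (cases c) auto
  then show "coordval c (act (mat_diag N' d) (mat_diag N' e) (iota N N' K x))
      = coordval c (iota N N' K x)"
    by (simp add: coordval_act_mat_diag[OF iota_Rep[OF x N] c] coordval_iota[OF x N c])
qed (use assms in \<open>simp_all add: act_Rep iota_Rep\<close>)

lemma coord_outside_cases:
  assumes "c \<in> coords N' K" "c \<notin> coords N K"
  shows "(\<exists>k. N \<le> k \<and> k < N' \<and> c = CB k k)
    \<or> (\<exists>d e. (\<forall>i<N. d i = 1 \<and> e i = 1) \<and> (\<forall>i. d i * e i = 1) \<and> weight d e c \<noteq> 1)"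
proof -
  have scaling: "\<exists>d e. (\<forall>i<N. d i = 1 \<and> e i = 1) \<and> (\<forall>i. d i * e i = 1) \<and> weight d e c \<noteq> 1"
    if "N \<le> r" "weight (\<lambda>i. if i = r then 2 else 1) (\<lambda>i. if i = r then 1 / 2 else 1) c \<noteq> 1" for r
    using that
    by (intro exI[of _ "\<lambda>i. if i = r then 2 else 1"] exI[of _ "\<lambda>i. if i = r then 1 / 2 else 1"])
      auto
  show ?thesis
  proof (cases c)
    case (CB m l)
    show ?thesis
    proof (cases "m = l")
      case False
      show ?thesis
      proof (cases "N \<le> m")
        case True
        then show ?thesis using scaling[of m] CB False by simp
      next
        case m: False
        then have "N \<le> l" using assms CB by auto
        then show ?thesis using scaling[of l] CB False by simp
      qed
    qed (use assms CB in auto)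
  next
    case (CP i a)
    then show ?thesis using scaling[of i] assms by auto
  next
    case (CPb b j)
    then show ?thesis using scaling[of j] assms by auto
  qed
qed

lemma pd_or_cbr_vanish_iota:
  assumes f: "invpoly N' K f" and x: "x \<in> Rep N K" and N: "N \<le> N'"
    and c: "c \<in> coords N' K" "c \<notin> coords N K"
  shows "pd f c (iota N N' K x) = 0
    \<or> (\<forall>c'. cbr K c c' (iota N N' K x) = 0 \<and> cbr K c' c (iota N N' K x) = 0)"
  using coord_outside_cases[OF c]
proof
  assume "\<exists>k. N \<le> k \<and> k < N' \<and> c = CB k k"
  then obtain k where k: "N \<le> k" "k < N'" "c = CB k k" by blast
  have "coordval (CP k a) (iota N N' K x) = 0" "coordval (CPb a k) (iota N N' K x) = 0"
    if "a < K" for a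
    using k that by (simp_all add: coordval_iota[OF x N])
  then show ?thesis using cbr_CB_diag_eq_0 k(3) by simp
next
  assume "\<exists>d e. (\<forall>i<N. d i = 1 \<and> e i = 1) \<and> (\<forall>i. d i * e i = 1) \<and> weight d e c \<noteq> 1"
  then obtain d e where "\<forall>i<N. d i = 1 \<and> e i = 1" "\<forall>i. d i * e i = 1" "weight d e c \<noteq> 1"
    by blast
  then show ?thesis
    using pd_invpoly_eq_0[OF f iota_Rep[OF x N] c(1) act_mat_diag_iota[OF x N]] by blast
qed

lemma pbr_iota:
  assumes f: "invpoly N' K f" and g: "invpoly N' K g" and x: "x \<in> Rep N K" and N: "N \<le> N'"
  shows "pbr N K (\<lambda>y. f (iota N N' K y)) (\<lambda>y. g (iota N N' K y)) x = pbr N' K f g (iota N N' K x)"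
proof -
  define T where "T c c' = pd f c (iota N N' K x) * pd g c' (iota N N' K x)
    * cbr K c c' (iota N N' K x)" for c c'
  have T0: "T c c' = 0"
    if "c \<in> coords N' K" "c' \<in> coords N' K" "c \<notin> coords N K \<or> c' \<notin> coords N K" for c c'
    using that pd_or_cbr_vanish_iota[OF f x N, of c] pd_or_cbr_vanish_iota[OF g x N, of c']
    unfolding T_def by auto
  have sub: "coords N K \<subseteq> coords N' K" by (rule coords_mono[OF N])
  have "pbr N' K f g (iota N N' K x) = (\<Sum>c\<in>coords N' K. \<Sum>c'\<in>coords N' K. T c c')"
    unfolding pbr_def T_def ..
  also have "\<dots> = (\<Sum>c\<in>coords N' K. \<Sum>c'\<in>coords N K. T c c')"
    by (intro sum.cong refl sum.mono_neutral_right finite_coords sub) (use T0 in auto)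
  also have "\<dots> = (\<Sum>c\<in>coords N K. \<Sum>c'\<in>coords N K. T c c')"
    by (intro sum.mono_neutral_right finite_coords sub) (use T0 sub in \<open>auto intro!: sum.neutral\<close>)
  also have "\<dots> = pbr N K (\<lambda>y. f (iota N N' K y)) (\<lambda>y. g (iota N N' K y)) x"
    unfolding pbr_def T_def by (intro sum.cong refl) (simp add: pd_iota[OF x N] cbr_iota[OF x N])
  finally show ?thesis ..
qed

theorem mainTheorem11:
  shows
   "(\<forall>N N' N'' K. N < N' \<and> N' < N'' \<longrightarrow>
       (\<forall>X\<in>Mq N K. qmap N'' K (iota N' N'' K) (qmap N' K (iota N N' K) X)
                    = qmap N'' K (iota N N'' K) X))
  \<and> (\<forall>N N' K. N < N' \<longrightarrow>
       (\<forall>f g. invpoly N' K f \<and> invpoly N' K g \<longrightarrow>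
          (\<forall>x\<in>Rep N K. pbr N K (\<lambda>y. f (iota N N' K y)) (\<lambda>y. g (iota N N' K y)) x
                        = pbr N' K f g (iota N N' K x))))
  \<and> (\<forall>N1 N1' N2 N2' K. N1 \<le> N1' \<and> N2 \<le> N2' \<longrightarrow>
       (\<forall>X1\<in>Mq N1 K. \<forall>X2\<in>Mq N2 K.
          qmap2 (N1' + N2') K (mmap N1' N2' K)
                (qmap N1' K (iota N1 N1' K) X1) (qmap N2' K (iota N2 N2' K) X2)
        = qmap (N1' + N2') K (iota (N1 + N2) (N1' + N2') K)
                (qmap2 (N1 + N2) K (mmap N1 N2 K) X1 X2)))"
  by (intro conjI allI impI ballI)
    (simp_all add: qmap_iota_iota pbr_iota qmap2_mmap_qmap_iota)

end
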